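(* Let $A$ be a free finitely generated abelian group endowed with a structure of commutative ring, and let $\chi\colon A\to\mathbb{Z}$ be a linear map such that the symmetric pairing $\langle x,y\rangle:=\chi(x\cdot y)$ on $A$ is unimodular. Let $A=F^0A\supset F^1A\supset\ldots\supset F^dA\supset F^{d+1}A=0$ be a decreasing filtration with $F^iA\cdot F^jA\subset F^{i+j}A$ for all $i,j\geqslant0$, and assume $\mathrm{rk}(\mathrm{gr}^i_FA)=\mathrm{rk}(\mathrm{gr}^{d-i}_FA)$ for each $0\leqslant i\leqslant d$. Suppose the filtration splits, i.e. for each $i$, $0\leqslant i\leqslant d$, the quotient $A/F^iA$ is torsion-free. Then for each $i$, $0\leqslant i\leqslant d$, the induced pairing between free finitely generated abelian groups $\langle\cdot,\cdot\rangle_i\colon\mathrm{gr}^i_FA\otimes\mathrm{gr}^{d-i}_FA\to\mathbb{Z}$ is unimodular.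
   Context: $\mathrm{gr}^i_FA=F^iA/F^{i+1}A$. The pairing $\langle\cdot,\cdot\rangle_i$ is induced by $\langle\cdot,\cdot\rangle$, which is well defined on these quotients since $\langle F^iA,F^jA\rangle=0$ when $i+j\geqslant d+1$. *)

theory Defs
  imports Main
begin

definition free_fg :: "'a::comm_ring_1 itself \<Rightarrow> bool" where
  "free_fg _ \<longleftrightarrow> (\<exists>B::'a set. finite B \<and>
     (\<forall>x::'a. \<exists>!c::'a \<Rightarrow> int. (\<forall>b. b \<notin> B \<longrightarrow> c b = 0) \<and>
                            x = (\<Sum>b\<in>B. of_int (c b) * b)))"

definition additive_on :: "'a::ab_group_add set \<Rightarrow> ('a \<Rightarrow> int) \<Rightarrow> bool" where
  "additive_on S f \<longleftrightarrow> (\<forall>x\<in>S. \<forall>y\<in>S. f (x + y) = f x + f y)"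

definition add_subgroup :: "'a::ab_group_add set \<Rightarrow> bool" where
  "add_subgroup H \<longleftrightarrow> 0 \<in> H \<and> (\<forall>x\<in>H. \<forall>y\<in>H. x + y \<in> H \<and> - x \<in> H)"

definition zindep_mod :: "'a::comm_ring_1 set \<Rightarrow> 'a set \<Rightarrow> bool" where
  "zindep_mod H S \<longleftrightarrow> (\<forall>c::'a \<Rightarrow> int. (\<Sum>s\<in>S. of_int (c s) * s) \<in> H \<longrightarrow> (\<forall>s\<in>S. c s = 0))"

definition rank_quot :: "'a::comm_ring_1 set \<Rightarrow> 'a set \<Rightarrow> nat" where
  "rank_quot G H = Sup {card S | S. finite S \<and> S \<subseteq> G \<and> zindep_mod H S}"

definition unimodular_pairing :: "('a::comm_ring_1 \<Rightarrow> int) \<Rightarrow> bool" where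
  "unimodular_pairing \<chi> \<longleftrightarrow>
     (\<forall>\<phi>::'a \<Rightarrow> int. additive_on UNIV \<phi> \<longrightarrow> (\<exists>!x. \<forall>y. \<phi> y = \<chi> (x * y)))"

text \<open>The induced pairing gr^i_F A \<otimes> gr^(d-i)_F A \<rightarrow> Z, where gr^i_F A = F i / F (i+1),
  is unimodular: the induced map gr^i \<rightarrow> Hom(gr^(d-i), Z) is bijective.\<close>
definition induced_unimodular ::
  "('a::comm_ring_1 \<Rightarrow> int) \<Rightarrow> (nat \<Rightarrow> 'a set) \<Rightarrow> nat \<Rightarrow> nat \<Rightarrow> bool" where
  "induced_unimodular \<chi> F d i \<longleftrightarrow>
     (\<forall>\<phi>::'a \<Rightarrow> int. additive_on (F (d - i)) \<phi> \<and> (\<forall>y\<in>F (d - i + 1). \<phi> y = 0) \<longrightarrow>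
        (\<exists>x\<in>F i. \<forall>y\<in>F (d - i). \<phi> y = \<chi> (x * y)))
   \<and> (\<forall>x\<in>F i. \<forall>x'\<in>F i. (\<forall>y\<in>F (d - i). \<chi> (x * y) = \<chi> (x' * y)) \<longrightarrow> x - x' \<in> F (i + 1))"

end

theory Submission
  imports Defs
begin

text \<open>Write \<open>n\<close> for the rank of \<open>A\<close> and \<open>r j\<close> for the rank of \<open>F j\<close>. Telescoping the rank symmetry
  of the graded pieces gives \<open>r j + r (d + 1 - j) = n\<close>. Since \<open>F j \<cdot> F (d + 1 - j) \<subseteq> F (d + 1) = 0\<close>,
  \<open>F j\<close> lies in the annihilator \<open>P\<close> of \<open>F (d + 1 - j)\<close>. A saturated subgroup \<open>H\<close> is a direct
  summand: it has a basis whose coordinate functionals extend to \<open>A\<close>. By unimodularity these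
  functionals are represented by elements of \<open>A\<close> that are independent of each other and of the
  annihilator of \<open>H\<close>, so the annihilator has rank at most \<open>n - rank H\<close>. Hence \<open>rank P \<le> r j\<close>, and
  as \<open>F j\<close> is saturated, \<open>P = F j\<close>.

  A functional on \<open>F (d - i)\<close> that
  kills \<open>F (d - i + 1)\<close> extends from the summand \<open>F (d - i)\<close> to \<open>A\<close> and is represented by some \<open>x\<close>,
  which then annihilates \<open>F (d + 1 - i)\<close>, so \<open>x \<in> F i\<close>. An element of \<open>F i\<close> orthogonal to
  \<open>F (d - i)\<close> lies in its annihilator \<open>F (i + 1)\<close>, or vanishes by nondegeneracy when \<open>i = d\<close>.\<close>

lemma add_subgroup_zero: "add_subgroup H \<Longrightarrow> 0 \<in> H"
  by (simp add: add_subgroup_def)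

lemma add_subgroup_add: "add_subgroup H \<Longrightarrow> x \<in> H \<Longrightarrow> y \<in> H \<Longrightarrow> x + y \<in> H"
  by (simp add: add_subgroup_def)

lemma add_subgroup_uminus: "add_subgroup H \<Longrightarrow> x \<in> H \<Longrightarrow> - x \<in> H"
  by (simp add: add_subgroup_def)

lemma add_subgroup_diff: "add_subgroup H \<Longrightarrow> x \<in> H \<Longrightarrow> y \<in> H \<Longrightarrow> x - y \<in> H"
  by (metis diff_conv_add_uminus add_subgroup_add add_subgroup_uminus)

lemma add_subgroup_UNIV: "add_subgroup UNIV"
  by (simp add: add_subgroup_def)

lemma add_subgroup_of_int_mult:
  assumes "add_subgroup H" "x \<in> H"
  shows "of_int k * (x::'a::comm_ring_1) \<in> H"
proof (induction k rule: int_induct[where k = 0])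
  case base show ?case using add_subgroup_zero[OF assms(1)] by simp
next
  case (step1 i) then show ?case using assms by (simp add: distrib_right add_subgroup_add)
next
  case (step2 i) then show ?case using assms by (simp add: left_diff_distrib add_subgroup_diff)
qed

lemma add_subgroup_sum:
  assumes "add_subgroup H" "\<And>i. i \<in> I \<Longrightarrow> f i \<in> H"
  shows "sum f I \<in> H"
  using assms add_subgroup_zero[OF assms(1)]
  by (induction I rule: infinite_finite_induct) (auto intro: add_subgroup_add)

lemma add_subgroup_lincomb:
  assumes "add_subgroup H" "\<And>i. i \<in> I \<Longrightarrow> v i \<in> H"
  shows "(\<Sum>i\<in>I. of_int (c i) * (v i :: 'a::comm_ring_1)) \<in> H"
  using assms by (intro add_subgroup_sum add_subgroup_of_int_mult)

lemma additive_on_zero: "additive_on H \<phi> \<Longrightarrow> add_subgroup H \<Longrightarrow> \<phi> 0 = 0"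
  unfolding additive_on_def by (metis add_subgroup_zero add.right_neutral add_cancel_right_right)

lemma additive_on_add: "additive_on H \<phi> \<Longrightarrow> x \<in> H \<Longrightarrow> y \<in> H \<Longrightarrow> \<phi> (x + y) = \<phi> x + \<phi> y"
  unfolding additive_on_def by blast

lemma additive_on_diff:
  assumes "additive_on H \<phi>" "add_subgroup H" "x \<in> H" "y \<in> H"
  shows "\<phi> (x - y) = \<phi> x - \<phi> y"
  using additive_on_add[OF assms(1) add_subgroup_diff[OF assms(2-4)] assms(4)] by simp

lemma additive_on_of_int_mult:
  assumes "additive_on H \<phi>" "add_subgroup H" "x \<in> H"
  shows "\<phi> (of_int k * (x::'a::comm_ring_1)) = k * \<phi> x"
proof (induction k rule: int_induct[where k = 0])
  case base show ?case using additive_on_zero[OF assms(1,2)] by simp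
next
  case (step1 i)
  have "\<phi> (of_int (i + 1) * x) = \<phi> (of_int i * x + x)" by (simp add: distrib_right)
  then show ?case
    using step1 additive_on_add[OF assms(1) add_subgroup_of_int_mult[OF assms(2,3)] assms(3)]
    by (simp add: distrib_right)
next
  case (step2 i)
  have "\<phi> (of_int (i - 1) * x) = \<phi> (of_int i * x - x)" by (simp add: left_diff_distrib)
  then show ?case
    using step2 additive_on_diff[OF assms(1,2) add_subgroup_of_int_mult[OF assms(2,3)] assms(3)]
    by (simp add: left_diff_distrib)
qed

lemma additive_on_lincomb:
  assumes "additive_on H \<phi>" "add_subgroup H" "\<And>i. i \<in> I \<Longrightarrow> v i \<in> H"
  shows "\<phi> (\<Sum>i\<in>I. of_int (c i) * (v i :: 'a::comm_ring_1)) = (\<Sum>i\<in>I. c i * \<phi> (v i))"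
  using assms(3)
proof (induction I rule: infinite_finite_induct)
  case (insert i I)
  have "\<phi> (of_int (c i) * v i + (\<Sum>j\<in>I. of_int (c j) * v j))
        = \<phi> (of_int (c i) * v i) + \<phi> (\<Sum>j\<in>I. of_int (c j) * v j)"
    using insert.prems
    by (intro additive_on_add[OF assms(1)] add_subgroup_of_int_mult[OF assms(2)]
        add_subgroup_lincomb[OF assms(2)]) auto
  then show ?case
    using insert additive_on_of_int_mult[OF assms(1,2)] by simp
qed (simp_all add: additive_on_zero[OF assms(1,2)])

lemma lincomb_delta:
  assumes "finite I" "i \<in> I"
  shows "(\<Sum>j\<in>I. of_int (if j = i then k else 0) * v j) = of_int k * (v i :: 'a::comm_ring_1)"
proof -
  have "(\<Sum>j\<in>I. of_int (if j = i then k else 0) * v j) = (\<Sum>j\<in>I. if j = i then of_int k * v j else 0)"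
    by (rule sum.cong) auto
  also have "\<dots> = of_int k * v i" using assms by simp
  finally show ?thesis .
qed

definition zspan :: "'a::comm_ring_1 set \<Rightarrow> 'a set" where
  "zspan T = {\<Sum>t\<in>T. of_int (c t) * t | c. True}"

lemma lincomb_in_zspan [intro]: "(\<Sum>t\<in>T. of_int (c t) * t) \<in> zspan T"
  unfolding zspan_def by blast

lemma zspan_empty: "zspan {} = {0}"
  unfolding zspan_def by simp

lemma add_subgroup_zspan: "add_subgroup (zspan T)"
  unfolding add_subgroup_def
proof (intro conjI ballI)
  show "0 \<in> zspan T" using lincomb_in_zspan[of "\<lambda>_. 0" T] by simp
  fix x y assume "x \<in> zspan T" "y \<in> zspan T"
  then obtain c e where x: "x = (\<Sum>t\<in>T. of_int (c t) * t)" and y: "y = (\<Sum>t\<in>T. of_int (e t) * t)"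
    by (auto simp: zspan_def)
  have "x + y = (\<Sum>t\<in>T. of_int (c t + e t) * t)"
    unfolding x y by (simp add: sum.distrib distrib_right)
  then show "x + y \<in> zspan T" by (metis lincomb_in_zspan)
  have "- x = (\<Sum>t\<in>T. of_int (- c t) * t)"
    unfolding x by (simp add: sum_negf)
  then show "- x \<in> zspan T" by (metis lincomb_in_zspan)
qed

lemma subset_zspan: "finite T \<Longrightarrow> T \<subseteq> zspan T"
  using lincomb_delta[of T _ 1 "\<lambda>t. t"] lincomb_in_zspan by (metis mult_1 of_int_1 subsetI)

lemma zspan_insert:
  assumes "finite T" "t \<notin> T" "x \<in> zspan (insert t T)"
  obtains a y where "y \<in> zspan T" "x = of_int a * t + y"
proof -
  obtain c where "x = (\<Sum>s\<in>insert t T. of_int (c s) * s)" using assms(3) by (auto simp: zspan_def)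
  then have "x = of_int (c t) * t + (\<Sum>s\<in>T. of_int (c s) * s)" using assms(1,2) by simp
  then show ?thesis using that lincomb_in_zspan by blast
qed

section \<open>Independence and the exchange lemma\<close>

definition zindep_on :: "'i set \<Rightarrow> ('i \<Rightarrow> 'a::comm_ring_1) \<Rightarrow> bool" where
  "zindep_on I v \<longleftrightarrow> (\<forall>c. (\<Sum>i\<in>I. of_int (c i) * v i) = 0 \<longrightarrow> (\<forall>i\<in>I. c i = 0))"

lemma zindep_mod_zero_iff: "zindep_mod {0} S \<longleftrightarrow> zindep_on S (\<lambda>s. s)"
  by (simp add: zindep_mod_def zindep_on_def)

lemma zindep_mod_imp_zindep: "0 \<in> H \<Longrightarrow> zindep_mod H S \<Longrightarrow> zindep_on S (\<lambda>s. s)"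
  unfolding zindep_mod_def zindep_on_def by metis

lemma zindep_modD: "zindep_mod H S \<Longrightarrow> (\<Sum>s\<in>S. of_int (c s) * s) \<in> H \<Longrightarrow> s \<in> S \<Longrightarrow> c s = 0"
  unfolding zindep_mod_def by blast

lemma zindep_onD: "zindep_on I v \<Longrightarrow> (\<Sum>i\<in>I. of_int (c i) * v i) = 0 \<Longrightarrow> i \<in> I \<Longrightarrow> c i = 0"
  unfolding zindep_on_def by blast

lemma zindep_onI: "(\<And>c. (\<Sum>i\<in>I. of_int (c i) * v i) = 0 \<Longrightarrow> \<forall>i\<in>I. c i = 0) \<Longrightarrow> zindep_on I v"
  unfolding zindep_on_def by blast

lemma zindep_on_scale:
  assumes "zindep_on I v" "\<And>i. i \<in> I \<Longrightarrow> k i \<noteq> 0"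
  shows "zindep_on I (\<lambda>i. of_int (k i) * v i)"
proof (rule zindep_onI)
  fix c assume "(\<Sum>i\<in>I. of_int (c i) * (of_int (k i) * v i)) = 0"
  then have "(\<Sum>i\<in>I. of_int (c i * k i) * v i) = 0" by (simp add: mult.assoc)
  then show "\<forall>i\<in>I. c i = 0" using zindep_onD[OF assms(1)] assms(2) by fastforce
qed

lemma zindep_on_image:
  assumes "finite I" "zindep_on I v"
  shows "inj_on v I" "zindep_on (v ` I) (\<lambda>x. x)"
proof -
  show inj: "inj_on v I"
  proof (rule inj_onI, rule ccontr)
    fix i j assume ij: "i \<in> I" "j \<in> I" "v i = v j" "i \<noteq> j"
    define c where "c k = (if k = i then 1 else 0) - (if k = j then 1 else (0::int))" for k
    have "(\<Sum>k\<in>I. of_int (c k) * v k)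
          = (\<Sum>k\<in>I. of_int (if k = i then 1 else 0) * v k) - (\<Sum>k\<in>I. of_int (if k = j then 1 else 0) * v k)"
      unfolding c_def by (simp add: left_diff_distrib sum_subtractf)
    also have "\<dots> = 0"
      using ij lincomb_delta[OF assms(1) ij(1), of 1 v] lincomb_delta[OF assms(1) ij(2), of 1 v] by simp
    finally have "c i = 0" using zindep_onD[OF assms(2)] ij(1) by blast
    then show False using ij(4) by (simp add: c_def)
  qed
  show "zindep_on (v ` I) (\<lambda>x. x)"
  proof (rule zindep_onI)
    fix c assume "(\<Sum>x\<in>v ` I. of_int (c x) * x) = 0"
    then have "(\<Sum>i\<in>I. of_int (c (v i)) * v i) = 0" by (simp add: sum.reindex[OF inj])
    then show "\<forall>x\<in>v ` I. c x = 0" using zindep_onD[OF assms(2), of "\<lambda>i. c (v i)"] by blast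
  qed
qed

text \<open>Steinitz exchange. In the induction step, the members with a nonzero coefficient at the new
  generator \<open>t\<close> are combined with one of them so as to eliminate \<open>t\<close>.\<close>

lemma zindep_on_card_le:
  assumes "finite T" "finite I" "zindep_on I v" "v ` I \<subseteq> zspan T"
  shows "card I \<le> card T"
  using assms
proof (induction T arbitrary: I v rule: finite_induct)
  case empty
  have "I = {}"
  proof (rule ccontr)
    assume "I \<noteq> {}"
    then obtain i where i: "i \<in> I" by blast
    have "(\<Sum>j\<in>I. of_int 1 * v j) = 0" using empty.prems(3) by (simp add: zspan_empty image_subset_iff)
    then show False using zindep_onD[OF empty.prems(2) _ i, of "\<lambda>_. 1"] by simp
  qed
  then show ?case by simp
next
  case (insert t T)
  have "\<forall>i\<in>I. \<exists>a y. y \<in> zspan T \<and> v i = of_int a * t + y"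
    using zspan_insert[OF insert.hyps] insert.prems(3) by (metis image_subset_iff)
  then obtain a y where ay: "\<And>i. i \<in> I \<Longrightarrow> y i \<in> zspan T \<and> v i = of_int (a i) * t + y i"
    by metis
  show ?case
  proof (cases "\<forall>i\<in>I. a i = 0")
    case True
    then have "v ` I \<subseteq> zspan T" using ay by auto
    then show ?thesis using insert.IH[OF insert.prems(1,2)] insert.hyps by simp
  next
    case False
    then obtain i0 where i0: "i0 \<in> I" "a i0 \<noteq> 0" by blast
    define J where "J = I - {i0}"
    define w where "w j = of_int (a i0) * v j - of_int (a j) * v i0" for j
    have "w j \<in> zspan T" if "j \<in> J" for j
    proof -
      have "w j = of_int (a i0) * y j - of_int (a j) * y i0"
        using ay[of j] ay[OF i0(1)] that by (simp add: w_def J_def algebra_simps)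
      then show ?thesis
        using ay[of j] ay[OF i0(1)] that
        by (simp add: J_def add_subgroup_diff add_subgroup_of_int_mult add_subgroup_zspan)
    qed
    moreover have "zindep_on J w"
    proof (rule zindep_onI)
      fix e assume e: "(\<Sum>j\<in>J. of_int (e j) * w j) = 0"
      define c where "c i = (if i = i0 then - (\<Sum>j\<in>J. e j * a j) else e i * a i0)" for i
      have "(\<Sum>j\<in>J. of_int (e j) * w j)
            = (\<Sum>j\<in>J. of_int (e j * a i0) * v j) - (\<Sum>j\<in>J. of_int (e j * a j) * v i0)"
        by (simp add: w_def right_diff_distrib sum_subtractf mult.assoc)
      also have "\<dots> = (\<Sum>j\<in>J. of_int (c j) * v j) + of_int (c i0) * v i0"
        by (simp add: c_def J_def sum_distrib_right[symmetric])
      also have "\<dots> = (\<Sum>i\<in>I. of_int (c i) * v i)"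
        using insert.prems(1) i0(1) by (simp add: J_def sum.remove)
      finally have "(\<Sum>i\<in>I. of_int (c i) * v i) = 0" using e by simp
      then have "\<And>j. j \<in> J \<Longrightarrow> c j = 0" using zindep_onD[OF insert.prems(2)] by (auto simp: J_def)
      then show "\<forall>j\<in>J. e j = 0" using i0(2) by (auto simp: c_def J_def)
    qed
    ultimately have "card J \<le> card T"
      using insert.IH[of J w] insert.prems(1) by (auto simp: J_def)
    then show ?thesis using insert i0(1) by (simp add: J_def)
  qed
qed

section \<open>Ranks in a free abelian group\<close>

abbreviation zrank :: "'a::comm_ring_1 set \<Rightarrow> nat" where
  "zrank G \<equiv> rank_quot G {0}"

locale free_basis =
  fixes B :: "'a::comm_ring_1 set"
  assumes finite_basis: "finite B"
    and unique_coordinates: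
      "\<forall>x. \<exists>!c::'a \<Rightarrow> int. (\<forall>b. b \<notin> B \<longrightarrow> c b = 0) \<and> x = (\<Sum>b\<in>B. of_int (c b) * b)"
begin

definition coord :: "'a \<Rightarrow> 'a \<Rightarrow> int" where
  "coord x = (THE c. (\<forall>b. b \<notin> B \<longrightarrow> c b = 0) \<and> x = (\<Sum>b\<in>B. of_int (c b) * b))"

lemma coord_spec: "(\<forall>b. b \<notin> B \<longrightarrow> coord x b = 0) \<and> x = (\<Sum>b\<in>B. of_int (coord x b) * b)"
  unfolding coord_def by (rule theI'[OF unique_coordinates[rule_format]])

lemma coord_expansion: "(\<Sum>b\<in>B. of_int (coord x b) * b) = x"
  using coord_spec by metis

lemma coord_outside: "b \<notin> B \<Longrightarrow> coord x b = 0"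
  using coord_spec by blast

lemma coord_eqI: "(\<And>b. b \<notin> B \<Longrightarrow> c b = 0) \<Longrightarrow> x = (\<Sum>b\<in>B. of_int (c b) * b) \<Longrightarrow> coord x = c"
  unfolding coord_def by (rule the1_equality[OF unique_coordinates[rule_format]]) simp

lemma coord_add: "coord (x + y) b = coord x b + coord y b"
proof -
  have "coord (x + y) = (\<lambda>b. coord x b + coord y b)"
    by (rule coord_eqI) (simp_all add: coord_outside sum.distrib distrib_right coord_expansion)
  then show ?thesis by simp
qed

lemma additive_coord: "additive_on UNIV (\<lambda>x. coord x b)"
  unfolding additive_on_def by (simp add: coord_add)

lemma zindep_basis: "zindep_on B (\<lambda>b. b)"
proof (rule zindep_onI)
  fix c assume c: "(\<Sum>b\<in>B. of_int (c b) * b) = 0"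
  have "(\<Sum>b\<in>B. of_int (if b \<in> B then c b else 0) * b) = (\<Sum>b\<in>B. of_int (c b) * b)"
    by (rule sum.cong) simp_all
  then have "coord 0 = (\<lambda>b. if b \<in> B then c b else 0)"
    using c by (intro coord_eqI) simp_all
  moreover have "coord 0 = (\<lambda>_. 0)" by (rule coord_eqI) simp_all
  ultimately show "\<forall>b\<in>B. c b = 0" by (metis (mono_tags))
qed

lemma in_zspan_basis: "x \<in> zspan B"
  using lincomb_in_zspan[of "coord x" B] by (simp add: coord_expansion)

lemma card_le_basis:
  fixes v :: "'i \<Rightarrow> 'a"
  shows "finite I \<Longrightarrow> zindep_on I v \<Longrightarrow> card I \<le> card B"
  using zindep_on_card_le[OF finite_basis, of I v] in_zspan_basis by blast

lemma rank_quot_eq_Max: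
  fixes H G :: "'a set"
  assumes "0 \<in> H"
  defines "C \<equiv> {card S |S. finite S \<and> S \<subseteq> G \<and> zindep_mod H S}"
  shows "finite C \<and> C \<noteq> {} \<and> rank_quot G H = Max C"
proof -
  have "C \<subseteq> {..card B}"
    using card_le_basis zindep_mod_imp_zindep[OF assms(1)] by (auto simp: C_def)
  then have "finite C" using finite_subset by blast
  moreover have "card {} \<in> C" unfolding C_def zindep_mod_def by (intro CollectI exI[of _ "{}"]) simp
  ultimately show ?thesis
    unfolding rank_quot_def C_def[symmetric] by (auto intro: cSup_eq_Max)
qed

lemma rank_quot_attained:
  fixes H G :: "'a set"
  assumes "0 \<in> H"
  obtains S where "finite S" "S \<subseteq> G" "zindep_mod H S" "card S = rank_quot G H"
proof -
  let ?C = "{card S |S. finite S \<and> S \<subseteq> G \<and> zindep_mod H S}"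
  have "Max ?C \<in> ?C" using rank_quot_eq_Max[OF assms, of G] by (intro Max_in) simp_all
  then show ?thesis using that rank_quot_eq_Max[OF assms, of G] by auto
qed

lemma card_le_rank_quot:
  fixes H G :: "'a set"
  assumes "0 \<in> H" "finite S" "S \<subseteq> G" "zindep_mod H S"
  shows "card S \<le> rank_quot G H"
  using rank_quot_eq_Max[OF assms(1), of G] assms(2-4) by (auto intro: Max_ge)

lemma rank_quot_maximal:
  fixes H G :: "'a set"
  assumes "0 \<in> H" "finite S" "S \<subseteq> G" "zindep_mod H S" "card S = rank_quot G H" "g \<in> G"
  obtains k c where "k \<noteq> 0" "of_int k * g + (\<Sum>s\<in>S. of_int (c s) * s) \<in> H"
proof (cases "g \<in> S")
  case True
  have "of_int 1 * g + (\<Sum>s\<in>S. of_int (if s = g then -1 else 0) * s) = 0"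
    using lincomb_delta[OF assms(2) True, of "-1" "\<lambda>s. s"] by simp
  then show ?thesis using that assms(1) by (metis one_neq_zero)
next
  case False
  have "\<not> zindep_mod H (insert g S)"
    using card_le_rank_quot[OF assms(1), where S = "insert g S" and G = G] False assms(2,3,5,6) by auto
  then obtain c where c: "(\<Sum>s\<in>insert g S. of_int (c s) * s) \<in> H" "\<exists>s\<in>insert g S. c s \<noteq> 0"
    unfolding zindep_mod_def by blast
  have sum: "(\<Sum>s\<in>insert g S. of_int (c s) * s) = of_int (c g) * g + (\<Sum>s\<in>S. of_int (c s) * s)"
    using False assms(2) by simp
  have "c g \<noteq> 0"
    using c assms(4) unfolding sum zindep_mod_def by fastforce
  then show ?thesis using that c(1) unfolding sum by blast
qed

lemma card_le_zrank:
  fixes G :: "'a set" and v :: "'i \<Rightarrow> 'a"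
  assumes "finite I" "v ` I \<subseteq> G" "zindep_on I v"
  shows "card I \<le> zrank G"
proof -
  have "card (v ` I) \<le> zrank G"
    using zindep_on_image(2)[OF assms(1,3)] assms(1,2)
    by (intro card_le_rank_quot) (simp_all add: zindep_mod_zero_iff)
  then show ?thesis using card_image[OF zindep_on_image(1)[OF assms(1,3)]] by simp
qed

lemma zrank_le_card:
  fixes G :: "'a set"
  assumes "finite T" "\<And>g. g \<in> G \<Longrightarrow> \<exists>k. k \<noteq> 0 \<and> of_int k * g \<in> zspan T"
  shows "zrank G \<le> card T"
proof -
  obtain U where U: "finite U" "U \<subseteq> G" "zindep_mod {0} U" "card U = zrank G"
    using rank_quot_attained[where H = "{0}" and G = G] by blast
  have "\<forall>u\<in>U. \<exists>k. k \<noteq> 0 \<and> of_int k * u \<in> zspan T" using assms(2) U(2) by blast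
  then obtain k where k: "\<And>u. u \<in> U \<Longrightarrow> k u \<noteq> 0 \<and> of_int (k u) * u \<in> zspan T"
    by metis
  have "card U \<le> card T"
    using zindep_on_card_le[OF assms(1) U(1) zindep_on_scale[of U "\<lambda>u. u" k]] U(3) k
    by (auto simp: zindep_mod_zero_iff)
  then show ?thesis using U(4) by simp
qed

lemma zrank_UNIV: "zrank (UNIV :: 'a set) = card B"
proof (rule order_antisym)
  obtain S :: "'a set" where S: "finite S" "zindep_mod {0} S" "card S = zrank (UNIV :: 'a set)"
    by (rule rank_quot_attained[where H = "{0}" and G = UNIV]) simp_all
  have "card S \<le> card B" using card_le_basis[of S "\<lambda>s. s"] S(1,2) by (simp add: zindep_mod_zero_iff)
  then show "zrank (UNIV :: 'a set) \<le> card B" using S(3) by simp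
  show "card B \<le> zrank (UNIV :: 'a set)"
    by (rule card_le_zrank[OF finite_basis _ zindep_basis]) simp
qed

lemma zrank_zero: "zrank {0::'a} = 0"
proof -
  have "\<exists>k. k \<noteq> 0 \<and> of_int k * g \<in> zspan {}" if "g \<in> {0}" for g :: 'a
    using that by (intro exI[of _ 1]) (simp add: zspan_empty)
  then show ?thesis using zrank_le_card[of "{}" "{0}"] by simp
qed

lemma zrank_eq_rank_quot_add_zrank:
  fixes G H :: "'a set"
  assumes H: "add_subgroup H" "H \<subseteq> G"
  shows "zrank G = rank_quot G H + zrank H"
proof (rule order_antisym)
  obtain S where S: "finite S" "S \<subseteq> G" "zindep_mod H S" "card S = rank_quot G H"
    by (rule rank_quot_attained[where H = H and G = G]) (use add_subgroup_zero[OF H(1)] in simp_all)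
  obtain T where T: "finite T" "T \<subseteq> H" "zindep_mod {0} T" "card T = zrank H"
    by (rule rank_quot_attained[where H = "{0}" and G = H]) simp_all
  have "\<exists>k. k \<noteq> 0 \<and> of_int k * g \<in> zspan (S \<union> T)" if g: "g \<in> G" for g
  proof -
    obtain k c where k: "k \<noteq> 0" and h: "of_int k * g + (\<Sum>s\<in>S. of_int (c s) * s) \<in> H"
      using rank_quot_maximal[OF add_subgroup_zero[OF H(1)] S g] by blast
    obtain m c' where m: "m \<noteq> 0"
      and "of_int m * (of_int k * g + (\<Sum>s\<in>S. of_int (c s) * s)) + (\<Sum>t\<in>T. of_int (c' t) * t) \<in> {0}"
      using rank_quot_maximal[of "{0}" T H, OF _ T h] by blast
    then have "of_int (m * k) * g = - (\<Sum>t\<in>T. of_int (c' t) * t) - of_int m * (\<Sum>s\<in>S. of_int (c s) * s)"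
      by (simp add: algebra_simps eq_neg_iff_add_eq_0)
    also have "\<dots> \<in> zspan (S \<union> T)"
      using subset_zspan[of "S \<union> T"] S(1) T(1) add_subgroup_zspan
      by (intro add_subgroup_diff add_subgroup_uminus add_subgroup_of_int_mult add_subgroup_lincomb) auto
    finally show ?thesis using k m by (intro exI[of _ "m * k"]) simp
  qed
  then have "zrank G \<le> card (S \<union> T)" using S(1) T(1) by (intro zrank_le_card) simp_all
  then show "zrank G \<le> rank_quot G H + zrank H"
    using card_Un_le[of S T] S(4) T(4) by simp
  define w :: "'a + 'a \<Rightarrow> 'a" where "w = case_sum (\<lambda>s. s) (\<lambda>t. t)"
  have "zindep_on (S <+> T) w"
  proof (rule zindep_onI)
    fix c assume "(\<Sum>x\<in>S <+> T. of_int (c x) * w x) = 0"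
    then have sum: "(\<Sum>s\<in>S. of_int (c (Inl s)) * s) = - (\<Sum>t\<in>T. of_int (c (Inr t)) * t)"
      using S(1) T(1) by (simp add: sum.Plus w_def eq_neg_iff_add_eq_0)
    also have "\<dots> \<in> H" using T(2) by (intro add_subgroup_uminus[OF H(1)] add_subgroup_lincomb[OF H(1)]) auto
    finally have cS: "\<forall>s\<in>S. c (Inl s) = 0" using zindep_modD[OF S(3), of "\<lambda>s. c (Inl s)"] by blast
    then have "(\<Sum>t\<in>T. of_int (c (Inr t)) * t) = 0" using sum by simp
    then have "\<forall>t\<in>T. c (Inr t) = 0" using zindep_modD[OF T(3), of "\<lambda>t. c (Inr t)"] by simp
    then show "\<forall>x\<in>S <+> T. c x = 0" using cS by blast
  qed
  moreover have "w ` (S <+> T) \<subseteq> G" using S(2) T(2) H(2) by (auto simp: w_def)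
  ultimately have "card (S <+> T) \<le> zrank G" using S(1) T(1) by (intro card_le_zrank) simp_all
  then show "rank_quot G H + zrank H \<le> zrank G" using card_Plus[OF S(1) T(1)] S(4) T(4) by simp
qed

end

section \<open>Saturated subgroups are direct summands\<close>

definition saturated :: "'a::comm_ring_1 set \<Rightarrow> bool" where
  "saturated H \<longleftrightarrow> (\<forall>k x. k \<noteq> 0 \<longrightarrow> of_int k * x \<in> H \<longrightarrow> x \<in> H)"

lemma saturatedD: "saturated H \<Longrightarrow> k \<noteq> 0 \<Longrightarrow> of_int k * x \<in> H \<Longrightarrow> x \<in> H"
  unfolding saturated_def by blast

text \<open>\<open>S\<close> is a basis of \<open>H\<close> whose coordinate functionals \<open>\<mu> s\<close> are defined on the whole ring; thus
  \<open>H\<close> is a direct summand.\<close>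

definition summand_basis :: "'a::comm_ring_1 set \<Rightarrow> 'a set \<Rightarrow> ('a \<Rightarrow> 'a \<Rightarrow> int) \<Rightarrow> bool" where
  "summand_basis H S \<mu> \<longleftrightarrow> finite S \<and> S \<subseteq> H \<and> (\<forall>s\<in>S. additive_on UNIV (\<mu> s))
     \<and> (\<forall>s\<in>S. \<forall>s'\<in>S. \<mu> s s' = (if s = s' then 1 else 0))
     \<and> (\<forall>h\<in>H. (\<Sum>s\<in>S. of_int (\<mu> s h) * s) = h)"

lemma add_subgroup_kernel:
  "add_subgroup H \<Longrightarrow> additive_on UNIV \<mu> \<Longrightarrow> add_subgroup {x\<in>H. \<mu> x = 0}"
  unfolding add_subgroup_def
  using additive_on_zero[OF _ add_subgroup_UNIV, of \<mu>]
    additive_on_diff[OF _ add_subgroup_UNIV UNIV_I UNIV_I, of \<mu> 0] additive_on_add[of UNIV \<mu>]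
  by auto

lemma saturated_kernel:
  "saturated H \<Longrightarrow> additive_on UNIV \<mu> \<Longrightarrow> saturated {x\<in>H. \<mu> x = 0}"
  unfolding saturated_def using additive_on_of_int_mult[OF _ add_subgroup_UNIV UNIV_I, of \<mu>] by auto

text \<open>If \<open>\<mu> w = 1\<close>, then \<open>v \<mapsto> v - \<mu> v \<cdot> w\<close> projects \<open>H\<close> onto the kernel of \<open>\<mu>\<close>; a summand basis
  of the kernel, composed with this projection, extends to one of \<open>H\<close> by adding \<open>w\<close>.\<close>

lemma summand_basis_insert:
  fixes \<mu> :: "'a::comm_ring_1 \<Rightarrow> int"
  assumes H: "add_subgroup H" "w \<in> H" and \<mu>: "additive_on UNIV \<mu>" "\<mu> w = 1"
    and K: "summand_basis {x\<in>H. \<mu> x = 0} S \<nu>"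
  shows "summand_basis H (insert w S) (\<lambda>s. if s = w then \<mu> else (\<lambda>v. \<nu> s (v - of_int (\<mu> v) * w)))"
proof -
  define p where "p v = v - of_int (\<mu> v) * w" for v
  have \<mu>_add: "\<mu> (x + y) = \<mu> x + \<mu> y" for x y using additive_on_add[OF \<mu>(1)] by simp
  have \<mu>_of_int: "\<mu> (of_int k * x) = k * \<mu> x" for k x
    using additive_on_of_int_mult[OF \<mu>(1) add_subgroup_UNIV] by simp
  have \<mu>_p: "\<mu> (p v) = 0" for v
    using additive_on_diff[OF \<mu>(1) add_subgroup_UNIV] \<mu>_of_int \<mu>(2) by (simp add: p_def)
  have p_add: "p (x + y) = p x + p y" for x y by (simp add: p_def \<mu>_add algebra_simps)
  have p_H: "p v \<in> H" if "v \<in> H" for v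
    using that H by (simp add: p_def add_subgroup_diff add_subgroup_of_int_mult)
  from K have S: "finite S" "S \<subseteq> H" "\<And>s. s \<in> S \<Longrightarrow> \<mu> s = 0"
    and \<nu>_add: "\<And>s. s \<in> S \<Longrightarrow> additive_on UNIV (\<nu> s)"
    and \<nu>_dual: "\<And>s s'. s \<in> S \<Longrightarrow> s' \<in> S \<Longrightarrow> \<nu> s s' = (if s = s' then 1 else 0)"
    and \<nu>_span: "\<And>h. h \<in> H \<Longrightarrow> \<mu> h = 0 \<Longrightarrow> (\<Sum>s\<in>S. of_int (\<nu> s h) * s) = h"
    unfolding summand_basis_def by auto
  have wS: "w \<notin> S" using S(3) \<mu>(2) by force
  have p_S: "p s = s" if "s \<in> S" for s using S(3)[OF that] by (simp add: p_def)
  show ?thesis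
    unfolding summand_basis_def p_def[symmetric]
  proof (intro conjI ballI)
    show "finite (insert w S)" "insert w S \<subseteq> H" using S H(2) by auto
  next
    fix s assume "s \<in> insert w S"
    then show "additive_on UNIV (if s = w then \<mu> else (\<lambda>v. \<nu> s (p v)))"
      using \<mu>(1) additive_on_add[OF \<nu>_add] unfolding additive_on_def by (auto simp: p_add)
  next
    fix s s' assume "s \<in> insert w S" "s' \<in> insert w S"
    moreover have "p w = 0" by (simp add: p_def \<mu>(2))
    ultimately show "(if s = w then \<mu> else (\<lambda>v. \<nu> s (p v))) s' = (if s = s' then 1 else 0)"
      using \<mu>(2) S(3) wS \<nu>_dual p_S additive_on_zero[OF \<nu>_add add_subgroup_UNIV] by auto
  next
    fix h assume h: "h \<in> H"
    have "(\<Sum>s\<in>insert w S. of_int ((if s = w then \<mu> else (\<lambda>v. \<nu> s (p v))) h) * s)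
          = of_int (\<mu> h) * w + (\<Sum>s\<in>S. of_int (\<nu> s (p h)) * s)"
      using S(1) wS by (auto intro!: sum.cong)
    also have "(\<Sum>s\<in>S. of_int (\<nu> s (p h)) * s) = p h" using \<nu>_span p_H[OF h] \<mu>_p by blast
    finally show "(\<Sum>s\<in>insert w S. of_int ((if s = w then \<mu> else (\<lambda>v. \<nu> s (p v))) h) * s) = h"
      by (simp add: p_def)
  qed
qed

context free_basis
begin

lemma subset_saturated_if_zrank_le:
  fixes G H :: "'a set"
  assumes H: "add_subgroup H" "saturated H" "H \<subseteq> G" and rank: "zrank G \<le> zrank H"
  shows "G \<subseteq> H"
proof
  fix g assume g: "g \<in> G"
  obtain S where S: "finite S" "S \<subseteq> H" "zindep_mod {0} S" "card S = zrank H"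
    by (rule rank_quot_attained[where H = "{0}" and G = H]) simp_all
  have "card S \<le> zrank G" using S H(3) by (intro card_le_rank_quot) auto
  then have "card S = zrank G" using S(4) rank by simp
  then obtain k c where k: "k \<noteq> 0" and "of_int k * g + (\<Sum>s\<in>S. of_int (c s) * s) \<in> {0}"
    using rank_quot_maximal[of "{0}" S G g] S(1-3) H(3) g by blast
  then have "of_int k * g = - (\<Sum>s\<in>S. of_int (c s) * s)" by (simp add: eq_neg_iff_add_eq_0)
  also have "\<dots> \<in> H"
    using S(2) by (intro add_subgroup_uminus[OF H(1)] add_subgroup_lincomb[OF H(1)]) auto
  finally show "g \<in> H" using saturatedD[OF H(2) k] by blast
qed

lemma dvd_coord_imp_divisible:
  assumes "\<And>b. b \<in> B \<Longrightarrow> n dvd coord h b"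
  shows "\<exists>w. of_int n * w = h"
proof
  have "of_int n * (\<Sum>b\<in>B. of_int (coord h b div n) * b) = (\<Sum>b\<in>B. of_int (n * (coord h b div n)) * b)"
    by (simp add: sum_distrib_left mult.assoc)
  also have "\<dots> = h" using assms by (simp add: coord_expansion cong: sum.cong)
  finally show "of_int n * (\<Sum>b\<in>B. of_int (coord h b div n) * b) = h" .
qed

text \<open>The least positive value \<open>n\<close> of a functional at \<open>h\<close> divides the values of all functionals at
  \<open>h\<close>, in particular all coordinates of \<open>h\<close>; so \<open>h = n w\<close>, with \<open>w \<in> H\<close> by saturation.\<close>

lemma saturated_primitive_element:
  fixes H :: "'a set"
  assumes H: "saturated H" "h \<in> H" "h \<noteq> 0"
  obtains w \<mu> where "w \<in> H" "additive_on UNIV \<mu>" "\<mu> w = 1"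
proof -
  let ?V = "{n::nat. 0 < n \<and> (\<exists>\<mu>. additive_on UNIV \<mu> \<and> \<mu> h = int n)}"
  obtain b where b: "b \<in> B" "coord h b \<noteq> 0"
    using coord_expansion[of h] H(3) by (metis (no_types, lifting) mult_zero_left of_int_0 sum.neutral)
  have "additive_on UNIV (\<lambda>x. sgn (coord h b) * coord x b)"
    unfolding additive_on_def by (simp add: coord_add distrib_left)
  moreover have "sgn (coord h b) * coord h b = int (nat \<bar>coord h b\<bar>)" by (simp add: sgn_if)
  ultimately have "nat \<bar>coord h b\<bar> \<in> ?V"
    using b(2) by (intro CollectI conjI exI[of _ "\<lambda>x. sgn (coord h b) * coord x b"]) simp_all
  then have "Least (\<lambda>n. n \<in> ?V) \<in> ?V" by (rule LeastI)
  then obtain n \<mu>0 where n: "0 < n" "n = Least (\<lambda>n. n \<in> ?V)"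
    and \<mu>0: "additive_on UNIV \<mu>0" "\<mu>0 h = int n" by blast
  have dvd: "int n dvd \<mu> h" if \<mu>: "additive_on UNIV \<mu>" for \<mu>
  proof (rule ccontr)
    assume "\<not> int n dvd \<mu> h"
    then have r: "0 < \<mu> h mod int n" "\<mu> h mod int n < int n"
      using n(1) by (simp_all add: dvd_eq_mod_eq_0 order_le_neq_trans)
    have "additive_on UNIV (\<lambda>x. \<mu> x - \<mu> h div int n * \<mu>0 x)"
      using \<mu> \<mu>0(1) unfolding additive_on_def by (simp add: algebra_simps)
    moreover have "\<mu> h - \<mu> h div int n * \<mu>0 h = \<mu> h mod int n"
      using \<mu>0(2) by (simp add: minus_div_mult_eq_mod[symmetric] mult.commute)
    ultimately have "nat (\<mu> h mod int n) \<in> ?V"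
      using r(1) by (intro CollectI conjI exI[of _ "\<lambda>x. \<mu> x - \<mu> h div int n * \<mu>0 x"]) simp_all
    then have "n \<le> nat (\<mu> h mod int n)" unfolding n(2) by (rule Least_le)
    then show False using r by simp
  qed
  obtain w where w: "of_int (int n) * w = h"
    using dvd_coord_imp_divisible dvd[OF additive_coord] by blast
  have "w \<in> H" using saturatedD[OF H(1), of "int n" w] n(1) w H(2) by simp
  moreover have "int n * \<mu>0 w = int n"
    using additive_on_of_int_mult[OF \<mu>0(1) add_subgroup_UNIV UNIV_I, of "int n" w] w \<mu>0(2) by simp
  then have "\<mu>0 w = 1" using n(1) by simp
  ultimately show ?thesis using that \<mu>0(1) by blast
qed

lemma zrank_kernel_less:
  fixes H :: "'a set"
  assumes "w \<in> H" "additive_on UNIV \<mu>" "\<mu> w = 1"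
  shows "zrank {x\<in>H. \<mu> x = 0} < zrank H"
proof -
  obtain S where S: "finite S" "S \<subseteq> {x\<in>H. \<mu> x = 0}" "zindep_mod {0} S" "card S = zrank {x\<in>H. \<mu> x = 0}"
    by (rule rank_quot_attained[where H = "{0}" and G = "{x\<in>H. \<mu> x = 0}"]) simp_all
  have wS: "w \<notin> S" using S(2) assms(3) by auto
  have "zindep_on (insert w S) (\<lambda>u. u)"
  proof (rule zindep_onI)
    fix c assume c: "(\<Sum>u\<in>insert w S. of_int (c u) * u) = 0"
    have "\<mu> (\<Sum>u\<in>insert w S. of_int (c u) * u) = (\<Sum>u\<in>insert w S. c u * \<mu> u)"
      by (rule additive_on_lincomb[OF assms(2) add_subgroup_UNIV]) simp
    also have "\<dots> = c w"
    proof -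
      have "(\<Sum>u\<in>S. c u * \<mu> u) = 0" using S(2) by (intro sum.neutral) auto
      then show ?thesis using S(1) wS assms(3) by simp
    qed
    finally have cw: "c w = 0" using c additive_on_zero[OF assms(2) add_subgroup_UNIV] by simp
    then have "(\<Sum>u\<in>S. of_int (c u) * u) = 0" using c S(1) wS by simp
    then show "\<forall>u\<in>insert w S. c u = 0" using cw zindep_modD[OF S(3), of c] by auto
  qed
  then have "card (insert w S) \<le> zrank H" using S(1,2) assms(1) by (intro card_le_zrank) auto
  then show ?thesis using S(1,4) wS by simp
qed

lemma saturated_summand_basis:
  fixes H :: "'a set"
  assumes "add_subgroup H" "saturated H"
  shows "\<exists>S \<mu>. summand_basis H S \<mu>"
  using assms
proof (induction "zrank H" arbitrary: H rule: less_induct)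
  case less
  show ?case
  proof (cases "H \<subseteq> {0}")
    case True
    then have "summand_basis H {} (\<lambda>_ _. 0)" by (auto simp: summand_basis_def)
    then show ?thesis by blast
  next
    case False
    then obtain h where "h \<in> H" "h \<noteq> 0" by blast
    then obtain w \<mu> where w: "w \<in> H" "additive_on UNIV \<mu>" "\<mu> w = 1"
      using saturated_primitive_element[OF less.prems(2)] by blast
    obtain S \<nu> where "summand_basis {x\<in>H. \<mu> x = 0} S \<nu>"
      using less.hyps[OF zrank_kernel_less[OF w] add_subgroup_kernel[OF less.prems(1) w(2)]
          saturated_kernel[OF less.prems(2) w(2)]] by blast
    then show ?thesis using summand_basis_insert[OF less.prems(1) w] by blast
  qed
qed

end

section \<open>Unimodular pairings\<close>

definition annihilator :: "('a::comm_ring_1 \<Rightarrow> int) \<Rightarrow> 'a set \<Rightarrow> 'a set" where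
  "annihilator \<chi> H = {x. \<forall>y\<in>H. \<chi> (x * y) = 0}"

locale unimodular_form = free_basis B for B :: "'a::comm_ring_1 set" +
  fixes \<chi> :: "'a \<Rightarrow> int"
  assumes chi_add: "\<And>x y. \<chi> (x + y) = \<chi> x + \<chi> y"
    and unimodular: "unimodular_pairing \<chi>"
begin

lemma chi_zero: "\<chi> 0 = 0"
  using chi_add[of 0 0] by simp

lemma additive_pairing_left: "additive_on UNIV (\<lambda>x. \<chi> (x * y))"
  unfolding additive_on_def by (simp add: distrib_right chi_add)

lemma pairing_represents: "additive_on UNIV \<phi> \<Longrightarrow> \<exists>x. \<forall>y. \<phi> y = \<chi> (x * y)"
  using unimodular unfolding unimodular_pairing_def by blast

lemma pairing_nondegenerate:
  assumes "\<And>y. \<chi> (x * y) = 0"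
  shows "x = 0"
proof -
  have "additive_on UNIV (\<lambda>_::'a. 0::int)" by (simp add: additive_on_def)
  then have "\<exists>!x. \<forall>y. (0::int) = \<chi> (x * y)" using unimodular unfolding unimodular_pairing_def by blast
  then show ?thesis using assms chi_zero by (metis mult_zero_left)
qed

text \<open>Extend \<open>\<phi>\<close> from \<open>H\<close> to the whole ring through the coordinate functionals of a summand basis.\<close>

lemma pairing_represents_on_saturated:
  fixes H :: "'a set"
  assumes H: "add_subgroup H" "saturated H" and \<phi>: "additive_on H \<phi>"
  shows "\<exists>x. \<forall>y\<in>H. \<phi> y = \<chi> (x * y)"
proof -
  obtain S \<mu> where "summand_basis H S \<mu>" using saturated_summand_basis[OF H] by blast
  then have S: "S \<subseteq> H" and \<mu>: "\<And>s. s \<in> S \<Longrightarrow> additive_on UNIV (\<mu> s)"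
    and span: "\<And>h. h \<in> H \<Longrightarrow> (\<Sum>s\<in>S. of_int (\<mu> s h) * s) = h"
    unfolding summand_basis_def by auto
  have "additive_on UNIV (\<lambda>v. \<Sum>s\<in>S. \<mu> s v * \<phi> s)"
    using additive_on_add[OF \<mu>] unfolding additive_on_def by (simp add: sum.distrib distrib_right)
  then obtain x where x: "\<And>y. (\<Sum>s\<in>S. \<mu> s y * \<phi> s) = \<chi> (x * y)" using pairing_represents by blast
  have "\<phi> h = \<chi> (x * h)" if h: "h \<in> H" for h
  proof -
    have "\<phi> h = \<phi> (\<Sum>s\<in>S. of_int (\<mu> s h) * s)" using span[OF h] by simp
    also have "\<dots> = (\<Sum>s\<in>S. \<mu> s h * \<phi> s)" using S by (intro additive_on_lincomb[OF \<phi> H(1)]) auto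
    finally show ?thesis using x by simp
  qed
  then show ?thesis by blast
qed

text \<open>The functionals representing the coordinate functionals of a summand basis of \<open>H\<close> are
  independent of each other and of the annihilator of \<open>H\<close>.\<close>

lemma zrank_annihilator_add_le:
  fixes H :: "'a set"
  assumes H: "add_subgroup H" "saturated H"
  shows "zrank (annihilator \<chi> H) + zrank H \<le> card B"
proof -
  obtain S \<mu> where "summand_basis H S \<mu>" using saturated_summand_basis[OF H] by blast
  then have S: "finite S" "S \<subseteq> H" and \<mu>: "\<And>s. s \<in> S \<Longrightarrow> additive_on UNIV (\<mu> s)"
    and dual: "\<And>s s'. s \<in> S \<Longrightarrow> s' \<in> S \<Longrightarrow> \<mu> s s' = (if s = s' then 1 else 0)"
    and span: "\<And>h. h \<in> H \<Longrightarrow> (\<Sum>s\<in>S. of_int (\<mu> s h) * s) = h"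
    unfolding summand_basis_def by auto
  have "\<forall>s\<in>S. \<exists>x. \<forall>y. \<mu> s y = \<chi> (x * y)" using pairing_represents \<mu> by blast
  then obtain X where X: "\<And>s y. s \<in> S \<Longrightarrow> \<mu> s y = \<chi> (X s * y)" by metis
  obtain T where T: "finite T" "T \<subseteq> annihilator \<chi> H" "zindep_mod {0} T" "card T = zrank (annihilator \<chi> H)"
    by (rule rank_quot_attained[where H = "{0}" and G = "annihilator \<chi> H"]) simp_all
  define w :: "'a + 'a \<Rightarrow> 'a" where "w = case_sum (\<lambda>t. t) X"
  have "zindep_on (T <+> S) w"
  proof (rule zindep_onI)
    fix c assume c: "(\<Sum>x\<in>T <+> S. of_int (c x) * w x) = 0"
    have sum: "(\<Sum>x\<in>T <+> S. of_int (c x) * w x)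
        = (\<Sum>t\<in>T. of_int (c (Inl t)) * t) + (\<Sum>s\<in>S. of_int (c (Inr s)) * X s)"
      using S(1) T(1) by (simp add: sum.Plus w_def)
    have cS: "c (Inr s') = 0" if s': "s' \<in> S" for s'
    proof -
      have "0 = \<chi> ((\<Sum>x\<in>T <+> S. of_int (c x) * w x) * s')" using c chi_zero by simp
      also have "\<dots> = (\<Sum>t\<in>T. c (Inl t) * \<chi> (t * s')) + (\<Sum>s\<in>S. c (Inr s) * \<chi> (X s * s'))"
        unfolding sum distrib_right chi_add
        using additive_on_lincomb[OF additive_pairing_left[of s'] add_subgroup_UNIV, of T "\<lambda>t. t"]
          additive_on_lincomb[OF additive_pairing_left[of s'] add_subgroup_UNIV, of S X]
        by simp
      also have "(\<Sum>t\<in>T. c (Inl t) * \<chi> (t * s')) = 0"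
        using T(2) S(2) s' by (intro sum.neutral) (auto simp: annihilator_def)
      also have "(\<Sum>s\<in>S. c (Inr s) * \<chi> (X s * s')) = (\<Sum>s\<in>S. if s = s' then c (Inr s') else 0)"
        using X[symmetric] dual s' by (intro sum.cong) auto
      finally show ?thesis using S(1) s' by simp
    qed
    then have "(\<Sum>t\<in>T. of_int (c (Inl t)) * t) = 0" using c unfolding sum by simp
    then have "\<forall>t\<in>T. c (Inl t) = 0" using zindep_modD[OF T(3), of "\<lambda>t. c (Inl t)"] by simp
    then show "\<forall>x\<in>T <+> S. c x = 0" using cS by blast
  qed
  then have "card (T <+> S) \<le> card B" using card_le_basis[of "T <+> S" w] T(1) S(1) by simp
  moreover have "zrank H \<le> card S"
  proof (rule zrank_le_card[OF S(1)])
    fix h assume "h \<in> H"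
    then have "of_int 1 * h \<in> zspan S" using span lincomb_in_zspan by (metis mult_1 of_int_1)
    then show "\<exists>k. k \<noteq> 0 \<and> of_int k * h \<in> zspan S" by (intro exI[of _ 1]) simp
  qed
  ultimately show ?thesis using T(4) card_Plus[OF T(1) S(1)] by simp
qed

end

section \<open>Filtrations\<close>

lemma tail_sums_complement:
  fixes r g :: "nat \<Rightarrow> nat"
  assumes step: "\<And>j. r j = g j + r (Suc j)" and top: "r (Suc d) = 0"
    and sym: "\<And>i. i \<le> d \<Longrightarrow> g i = g (d - i)"
  shows "i \<le> Suc d \<Longrightarrow> r i + r (Suc d - i) = r 0"
proof (induction i)
  case 0 then show ?case using top by simp
next
  case (Suc i)
  then have "r (Suc i) + r (Suc d - Suc i) = r (Suc i) + g i + r (Suc d - i)"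
    using step[of "d - i"] sym[of i] by (simp add: Suc_diff_le)
  also have "\<dots> = r 0" using Suc step[of i] by simp
  finally show ?case .
qed

locale unimodular_filtration = unimodular_form B \<chi> for B :: "'a::comm_ring_1 set" and \<chi> +
  fixes F :: "nat \<Rightarrow> 'a set" and d :: nat
  assumes subgroup_F: "\<And>i. add_subgroup (F i)"
    and F_0: "F 0 = UNIV"
    and F_Suc_subset: "\<And>i. F (Suc i) \<subseteq> F i"
    and F_top: "\<And>k. k \<ge> d + 1 \<Longrightarrow> F k = {0}"
    and F_mult: "\<And>i j x y. x \<in> F i \<Longrightarrow> y \<in> F j \<Longrightarrow> x * y \<in> F (i + j)"
    and rank_gr_symmetric:
      "\<And>i. i \<le> d \<Longrightarrow> rank_quot (F i) (F (i + 1)) = rank_quot (F (d - i)) (F (d - i + 1))"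
    and saturated_F: "\<And>i. i \<le> d \<Longrightarrow> saturated (F i)"
begin

lemma zrank_F_complement:
  assumes "i \<le> d + 1"
  shows "zrank (F i) + zrank (F (d + 1 - i)) = card B"
proof -
  have step: "zrank (F j) = rank_quot (F j) (F (Suc j)) + zrank (F (Suc j))" for j
    using zrank_eq_rank_quot_add_zrank[OF subgroup_F F_Suc_subset] .
  have top: "zrank (F (Suc d)) = 0" using F_top[of "Suc d"] zrank_zero by simp
  have sym: "rank_quot (F j) (F (Suc j)) = rank_quot (F (d - j)) (F (Suc (d - j)))" if "j \<le> d" for j
    using rank_gr_symmetric[OF that] by simp
  have "zrank (F i) + zrank (F (Suc d - i)) = zrank (F 0)"
    using tail_sums_complement[of "\<lambda>j. zrank (F j)", OF step top sym] assms by simp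
  then show ?thesis using F_0 zrank_UNIV by simp
qed

lemma F_subset_annihilator:
  assumes "i + j \<ge> d + 1"
  shows "F i \<subseteq> annihilator \<chi> (F j)"
proof
  fix x assume "x \<in> F i"
  then have "x * y = 0" if "y \<in> F j" for y using F_mult[OF _ that] F_top[OF assms] by blast
  then show "x \<in> annihilator \<chi> (F j)" by (simp add: annihilator_def chi_zero)
qed

lemma annihilator_F_subset:
  assumes "1 \<le> j" "j \<le> d"
  shows "annihilator \<chi> (F (d + 1 - j)) \<subseteq> F j"
proof (rule subset_saturated_if_zrank_le[OF subgroup_F saturated_F[OF assms(2)]])
  show "F j \<subseteq> annihilator \<chi> (F (d + 1 - j))" using assms by (intro F_subset_annihilator) simp
  have "zrank (annihilator \<chi> (F (d + 1 - j))) + zrank (F (d + 1 - j)) \<le> card B"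
    using assms by (intro zrank_annihilator_add_le subgroup_F saturated_F) simp
  then show "zrank (annihilator \<chi> (F (d + 1 - j))) \<le> zrank (F j)"
    using zrank_F_complement[of j] assms by simp
qed

lemma induced_unimodular_F:
  assumes i: "i \<le> d"
  shows "induced_unimodular \<chi> F d i"
  unfolding induced_unimodular_def
proof (intro conjI allI impI ballI)
  fix \<phi> assume \<phi>: "additive_on (F (d - i)) \<phi> \<and> (\<forall>y\<in>F (d - i + 1). \<phi> y = 0)"
  obtain x where x: "\<And>y. y \<in> F (d - i) \<Longrightarrow> \<phi> y = \<chi> (x * y)"
    using pairing_represents_on_saturated[OF subgroup_F saturated_F] \<phi> by (meson diff_le_self)
  have "x \<in> F i"
  proof (cases "i = 0")
    case True then show ?thesis using F_0 by simp
  next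
    case False
    have "\<chi> (x * y) = 0" if y: "y \<in> F (d + 1 - i)" for y
    proof -
      have "y \<in> F (d - i)" "y \<in> F (d - i + 1)"
        using y F_Suc_subset[of "d - i"] i by (auto simp: Suc_diff_le)
      then show ?thesis using x[of y] \<phi> by simp
    qed
    then have "x \<in> annihilator \<chi> (F (d + 1 - i))" by (simp add: annihilator_def)
    then show ?thesis using annihilator_F_subset[of i] False i by auto
  qed
  then show "\<exists>x\<in>F i. \<forall>y\<in>F (d - i). \<phi> y = \<chi> (x * y)" using x by blast
next
  fix x x' assume "x \<in> F i" "x' \<in> F i" and eq: "\<forall>y\<in>F (d - i). \<chi> (x * y) = \<chi> (x' * y)"
  have "\<chi> ((x - x') * y) = 0" if "y \<in> F (d - i)" for y
  proof -
    have "\<chi> (x * y) = \<chi> ((x - x') * y) + \<chi> (x' * y)"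
      using chi_add by (metis diff_add_cancel distrib_right)
    then show ?thesis using eq that by simp
  qed
  then have ann: "x - x' \<in> annihilator \<chi> (F (d - i))" by (simp add: annihilator_def)
  show "x - x' \<in> F (i + 1)"
  proof (cases "i = d")
    case True
    then have "x - x' = 0" using ann F_0 by (intro pairing_nondegenerate) (simp add: annihilator_def)
    then show ?thesis using add_subgroup_zero[OF subgroup_F] by simp
  next
    case False
    then show ?thesis using ann annihilator_F_subset[of "i + 1"] i by auto
  qed
qed

end

theorem lemma4p1:
  fixes \<chi> :: "'a::comm_ring_1 \<Rightarrow> int" and F :: "nat \<Rightarrow> 'a set" and d :: nat
  assumes free: "free_fg TYPE('a)"
    and chi_lin: "\<And>x y. \<chi> (x + y) = \<chi> x + \<chi> y"
    and unimod: "unimodular_pairing \<chi>"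
    and subgrp: "\<And>i. add_subgroup (F i)"
    and F0: "F 0 = UNIV"
    and Fdec: "\<And>i. F (Suc i) \<subseteq> F i"
    and Ftop: "\<And>k. k \<ge> d + 1 \<Longrightarrow> F k = {0}"
    and Fmult: "\<And>i j x y. x \<in> F i \<Longrightarrow> y \<in> F j \<Longrightarrow> x * y \<in> F (i + j)"
    and rk: "\<And>i. i \<le> d \<Longrightarrow> rank_quot (F i) (F (i + 1)) = rank_quot (F (d - i)) (F (d - i + 1))"
    and split: "\<And>i x (n::int). i \<le> d \<Longrightarrow> n \<noteq> 0 \<Longrightarrow> of_int n * x \<in> F i \<Longrightarrow> x \<in> F i"
  shows "\<forall>i\<le>d. induced_unimodular \<chi> F d i"
proof -
  obtain B :: "'a set" where B: "free_basis B"
    using free unfolding free_fg_def free_basis_def by blast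
  interpret unimodular_filtration B \<chi> F d
  proof unfold_locales
    show "\<And>i. i \<le> d \<Longrightarrow> saturated (F i)" using split by (auto simp: saturated_def)
  qed (fact free_basis.finite_basis[OF B] free_basis.unique_coordinates[OF B]
      chi_lin unimod subgrp F0 Fdec Ftop Fmult rk)+
  show ?thesis using induced_unimodular_F by blast
qed

end
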